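(* Let $g$, $\mathbf{g}=g^{\oplus n}$ be as in the context, and let $\mathbf{A},\mathbf{B},\mathbf{C},\mathbf{D}$ be linear operators on $\mathbf{g}$ with components $A_{ij},B_{ij},C_{ij},D_{ij}$ such that $A_{ij}^*=-A_{ji}$, $D_{ij}^*=-D_{ji}$, $B_{ij}^*=C_{ji}$ and such that PB$(\mathbf{A},\mathbf{B},\mathbf{C},\mathbf{D})$ is a Poisson bracket on $\mathbf{g}$. Let $\varphi$ be a smooth Ad-invariant function on $g$ and $\Phi(\mathbf{u})=\varphi(u_n\cdots u_1)$. For $1\le j\le n$ put $T_j=u_j\cdots u_1\cdot u_n\cdots u_{j+1}$ (so $T_n=u_n\cdots u_1$). Then the Hamiltonian equations of motion on $\mathbf{g}$ generated by $\Phi$ are $\dot u_i=u_i\,\mathcal{R}_i-\mathcal{L}_i\,u_i$, $i=1,\dots,n$, where $\mathcal{R}_i=\sum_{j=1}^n\big(A_{i,j+1}+B_{i,j}\big)\big(d\varphi(T_j)\big)$ and $\mathcal{L}_i=\sum_{j=1}^n\big(D_{i,j}+C_{i,j+1}\big)\big(d\varphi(T_j)\big)$, with subscripts taken mod $n$ (so $A_{i,n+1}=A_{i,1}$, $C_{i,n+1}=C_{i,1}$).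
   Context: $g$ is an associative algebra with a nondegenerate symmetric bilinear form $\langle\cdot,\cdot\rangle$ with $\langle uv,w\rangle=\langle u,vw\rangle$; $X^*$ denotes the adjoint of a linear operator $X$ on $g$. For smooth $\varphi$ on $g$, $\nabla\varphi(u)$ is defined by $\langle\nabla\varphi(u),X\rangle=\frac{d}{d\varepsilon}\varphi(u+\varepsilon X)|_{\varepsilon=0}$, $d\varphi(u)=u\nabla\varphi(u)$, $d'\varphi(u)=\nabla\varphi(u)u$. $\varphi$ is Ad-invariant if $\varphi(huh^{-1})=\varphi(u)$ for invertible $h$ (equivalently $d\varphi=d'\varphi$). $\mathbf{g}=g\oplus\cdots\oplus g$ ($n$ copies), componentwise multiplication, form $\langle\langle\mathbf{u},\mathbf{v}\rangle\rangle=\sum_k\langle u_k,v_k\rangle$. Components of an operator: $(\mathbf{A}(\mathbf{u}))_i=\sum_j A_{ij}(u_j)$. For smooth $\Phi$ on $\mathbf{g}$, $\nabla_j\Phi$ is the $j$-th component of its gradient, $d_j\Phi=u_j\nabla_j\Phi$, $d'_j\Phi=\nabla_j\Phi\,u_j$, and PB$(\mathbf{A},\mathbf{B},\mathbf{C},\mathbf{D})$ is $\{\Phi,\Psi\}(\mathbf{u})=\sum_{i,j}\big(\langle A_{ij}(d'_j\Phi),d'_i\Psi\rangle-\langle D_{ij}(d_j\Phi),d_i\Psi\rangle+\langle B_{ij}(d_j\Phi),d'_i\Psi\rangle-\langle C_{ij}(d'_j\Phi),d_i\Psi\rangle\big)$. The Hamiltonian equations generated by $\Phi$ are the equations $\frac{d}{dt}\ell(\mathbf{u})=\{\Phi,\ell\}(\mathbf{u})$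 for all linear functions $\ell$ on $\mathbf{g}$. *)

theory Defs
  imports "HOL-Analysis.Analysis"
begin

primrec Ck :: "nat \<Rightarrow> ('v::real_normed_vector \<Rightarrow> real) \<Rightarrow> bool" where
  "Ck 0 f = continuous_on UNIV f"
| "Ck (Suc k) f = ((\<forall>x. f differentiable (at x)) \<and>
      (\<forall>v. Ck k (\<lambda>x. frechet_derivative f (at x) v)))"

definition smooth :: "('v::real_normed_vector \<Rightarrow> real) \<Rightarrow> bool" where
  "smooth f \<longleftrightarrow> (\<forall>k. Ck k f)"

definition grad :: "('v::real_vector \<Rightarrow> 'v \<Rightarrow> real) \<Rightarrow> ('v \<Rightarrow> real) \<Rightarrow> 'v \<Rightarrow> 'v" where
  "grad form f u = (THE w. \<forall>X. ((\<lambda>eps. f (u + eps *\<^sub>R X)) has_real_derivative form w X) (at 0))"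

definition adjoint :: "('v \<Rightarrow> 'v \<Rightarrow> real) \<Rightarrow> ('v \<Rightarrow> 'v) \<Rightarrow> ('v \<Rightarrow> 'v)" where
  "adjoint form X = (THE Y. \<forall>u v. form (X u) v = form u (Y v))"

definition inv_form :: "('a::real_algebra_1 \<Rightarrow> 'a \<Rightarrow> real) \<Rightarrow> bool" where
  "inv_form form \<longleftrightarrow> bilinear form \<and> (\<forall>u v. form u v = form v u)
     \<and> (\<forall>u. (\<forall>v. form u v = 0) \<longrightarrow> u = 0)
     \<and> (\<forall>u v w. form (u * v) w = form u (v * w))"

definition dphi :: "('a::real_algebra_1 \<Rightarrow> 'a \<Rightarrow> real) \<Rightarrow> ('a \<Rightarrow> real) \<Rightarrow> 'a \<Rightarrow> 'a" where
  "dphi form f u = u * grad form f u"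

definition Ad_invariant :: "('a::real_algebra_1 \<Rightarrow> real) \<Rightarrow> bool" where
  "Ad_invariant f \<longleftrightarrow> (\<forall>h k u. h * k = 1 \<and> k * h = 1 \<longrightarrow> f (h * u * k) = f u)"

section \<open>The direct sum g^n, indexed by 1..n through a bijection ix : {1..n} -> 'n\<close>

definition bform :: "('a \<Rightarrow> 'a \<Rightarrow> real) \<Rightarrow> 'a ^ 'n::finite \<Rightarrow> 'a ^ 'n \<Rightarrow> real" where
  "bform form u v = (\<Sum>k\<in>UNIV. form (u $ k) (v $ k))"

text \<open>Component A_ij of an operator on g^n: (A u)_i = sum_j A_ij (u_j).\<close>
definition cmp :: "(nat \<Rightarrow> 'n::finite) \<Rightarrow> ('a::zero ^ 'n \<Rightarrow> 'a ^ 'n) \<Rightarrow> nat \<Rightarrow> nat \<Rightarrow> 'a \<Rightarrow> 'a" where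
  "cmp ix A i j x = A (\<chi> k. if k = ix j then x else 0) $ ix i"

definition dj :: "('a::real_algebra_1 \<Rightarrow> 'a \<Rightarrow> real) \<Rightarrow> (nat \<Rightarrow> 'n::finite)
    \<Rightarrow> ('a ^ 'n \<Rightarrow> real) \<Rightarrow> nat \<Rightarrow> 'a ^ 'n \<Rightarrow> 'a" where
  "dj form ix F j u = u $ ix j * grad (bform form) F u $ ix j"

definition dj' :: "('a::real_algebra_1 \<Rightarrow> 'a \<Rightarrow> real) \<Rightarrow> (nat \<Rightarrow> 'n::finite)
    \<Rightarrow> ('a ^ 'n \<Rightarrow> real) \<Rightarrow> nat \<Rightarrow> 'a ^ 'n \<Rightarrow> 'a" where
  "dj' form ix F j u = grad (bform form) F u $ ix j * u $ ix j"

definition PB :: "('a::real_algebra_1 \<Rightarrow> 'a \<Rightarrow> real) \<Rightarrow> nat \<Rightarrow> (nat \<Rightarrow> 'n::finite)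
   \<Rightarrow> ('a ^ 'n \<Rightarrow> 'a ^ 'n) \<Rightarrow> ('a ^ 'n \<Rightarrow> 'a ^ 'n) \<Rightarrow> ('a ^ 'n \<Rightarrow> 'a ^ 'n) \<Rightarrow> ('a ^ 'n \<Rightarrow> 'a ^ 'n)
   \<Rightarrow> ('a ^ 'n \<Rightarrow> real) \<Rightarrow> ('a ^ 'n \<Rightarrow> real) \<Rightarrow> 'a ^ 'n \<Rightarrow> real" where
  "PB form n ix A B C D F G u =
     (\<Sum>i=1..n. \<Sum>j=1..n.
        form (cmp ix A i j (dj' form ix F j u)) (dj' form ix G i u)
      - form (cmp ix D i j (dj form ix F j u)) (dj form ix G i u)
      + form (cmp ix B i j (dj form ix F j u)) (dj' form ix G i u)
      - form (cmp ix C i j (dj' form ix F j u)) (dj form ix G i u))"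

definition is_poisson_bracket ::
  "(('v::real_normed_vector \<Rightarrow> real) \<Rightarrow> ('v \<Rightarrow> real) \<Rightarrow> ('v \<Rightarrow> real)) \<Rightarrow> bool" where
  "is_poisson_bracket P \<longleftrightarrow>
     (\<forall>F G H a b. smooth F \<and> smooth G \<and> smooth H \<longrightarrow>
        smooth (P F G)
      \<and> P (\<lambda>x. a * F x + b * G x) H = (\<lambda>x. a * P F H x + b * P G H x)
      \<and> P F G = (\<lambda>x. - P G F x)
      \<and> P F (\<lambda>x. G x * H x) = (\<lambda>x. P F G x * H x + G x * P F H x)
      \<and> (\<lambda>x. P F (P G H) x + P G (P H F) x + P H (P F G) x) = (\<lambda>x. 0))"

definition rprod :: "(nat \<Rightarrow> 'a::monoid_mult) \<Rightarrow> nat \<Rightarrow> nat \<Rightarrow> 'a" where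
  "rprod u a b = prod_list (map u (rev [a..<b+1]))"

definition Tprod :: "(nat \<Rightarrow> 'a::monoid_mult) \<Rightarrow> nat \<Rightarrow> nat \<Rightarrow> 'a" where
  "Tprod u n j = rprod u 1 j * rprod u (j + 1) n"

end

theory Submission
  imports Defs "HOL-Computational_Algebra.Polynomial"
begin

(* An Ad-invariant continuous phi satisfies phi (M * N) = phi (N * M): this holds when M is a unit,
   and M + s * 1 is a unit for all but finitely many real s because M has an annihilating
   polynomial. Differentiating gives grad phi (M * N) * M = M * grad phi (N * M). The gradient of
   Phi u = phi (u_n ... u_1) has j-th component u_(j-1) ... u_1 * grad phi (u_n ... u_1) * u_n ... u_(j+1),
   so d_j Phi = d phi (T_j) and d'_j Phi = d phi (T_(j-1)), where T_0 = T_n. For a linear function l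
   the gradient is the constant Riesz vector of l, and the invariance of the form turns the bracket
   of Phi with l into l applied to the vector field with components u_i R_i - L_i u_i. *)

section \<open>Gradients with respect to a nondegenerate bilinear form\<close>

lemma has_real_derivative_compose_curve:
  assumes "(c has_vector_derivative v) (at t)" and "(f has_derivative D) (at (c t))"
  shows "((\<lambda>s. f (c s)) has_real_derivative D v) (at t)"
  using vector_derivative_diff_chain_within[of c v t UNIV f D] assms
  by (simp add: has_real_derivative_iff_has_vector_derivative has_derivative_at_withinI o_def)

lemma has_derivative_along_line:
  assumes "(f has_derivative D) (at p)"
  shows "((\<lambda>e. f (p + e *\<^sub>R X)) has_real_derivative D X) (at 0)"
  by (rule has_real_derivative_compose_curve) (use assms in \<open>auto intro!: derivative_eq_intros\<close>)

locale nondegenerate_form =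
  fixes B :: "'v::euclidean_space \<Rightarrow> 'v \<Rightarrow> real"
  assumes bilinear: "bilinear B"
    and nondegenerate: "\<And>u. (\<And>v. B u v = 0) \<Longrightarrow> u = 0"
begin

lemma bounded_bilinear: "bounded_bilinear B"
  using bilinear bilinear_conv_bounded_bilinear by blast

lemma eqI: "(\<And>v. B u v = B u' v) \<Longrightarrow> u = u'"
  using nondegenerate[of "u - u'"] bounded_bilinear.diff_left[OF bounded_bilinear] by simp

lemma representation:
  assumes "linear f"
  obtains w where "\<And>v. B w v = f v"
proof -
  have linB: "linear (B u)" for u
    using bilinear by (simp add: bilinear_def)
  \<comment> \<open>J u is the vector representing B u through the inner product; nondegeneracy makes J
     injective, hence surjective in finite dimension.\<close>
  define J where "J u = (\<Sum>b\<in>Basis. B u b *\<^sub>R b)" for u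
  have expand: "g v = (\<Sum>b\<in>Basis. (v \<bullet> b) * g b)" if "linear g" for g :: "'v \<Rightarrow> real" and v
    using linear_sum[OF that, of "\<lambda>b. (v \<bullet> b) *\<^sub>R b" Basis]
    by (simp add: euclidean_representation linear_scale[OF that])
  have B_J: "B u v = v \<bullet> J u" for u v
    using expand[OF linB, of u v] by (simp add: J_def inner_sum_right mult.commute)
  interpret bounded_bilinear B
    by (rule bounded_bilinear)
  have "linear J"
    by (auto intro!: linearI simp: J_def add_left scaleR_left scaleR_add_left sum.distrib scaleR_sum_right)
  moreover have "inj J"
    using nondegenerate B_J by (auto intro!: linear_injective_0[THEN iffD2, OF \<open>linear J\<close>])
  ultimately obtain w where "J w = (\<Sum>b\<in>Basis. f b *\<^sub>R b)"
    by (metis linear_inj_imp_surj surjD)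
  then have "B w v = f v" for v
    using expand[OF assms, of v] by (simp add: B_J inner_sum_right mult.commute)
  then show thesis by (rule that)
qed

lemma grad_eqI:
  assumes "\<And>X. ((\<lambda>e. f (p + e *\<^sub>R X)) has_real_derivative B w X) (at 0)"
  shows "grad B f p = w"
  unfolding grad_def
proof (rule the_equality)
  fix w' assume "\<forall>X. ((\<lambda>e. f (p + e *\<^sub>R X)) has_real_derivative B w' X) (at 0)"
  then show "w' = w"
    using assms DERIV_unique by (blast intro: eqI)
qed (use assms in blast)

lemma has_derivative_grad:
  assumes "f differentiable (at p)"
  shows "(f has_derivative B (grad B f p)) (at p)"
proof -
  obtain D where D: "(f has_derivative D) (at p)"
    using assms unfolding differentiable_def by blast
  obtain w where w: "\<And>v. B w v = D v"
    using representation[OF has_derivative_linear[OF D]] by blast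
  have "grad B f p = w"
    by (rule grad_eqI) (use has_derivative_along_line[OF D] w in simp)
  with D w show ?thesis
    by (metis ext)
qed

lemma grad_linear:
  assumes "linear l"
  shows "B (grad B l p) v = l v"
proof -
  obtain w where w: "\<And>v. B w v = l v"
    using representation[OF assms] by blast
  have "B w = l"
    using w by blast
  then have "(l has_derivative B w) (at p)"
    using assms by (simp add: linear_conv_bounded_linear bounded_linear_imp_has_derivative)
  then have "grad B l p = w"
    by (intro grad_eqI has_derivative_along_line)
  with w show ?thesis
    by simp
qed

end

definition vec_of_indexed :: "nat \<Rightarrow> (nat \<Rightarrow> 'n::finite) \<Rightarrow> (nat \<Rightarrow> 'a) \<Rightarrow> 'a ^ 'n" where
  "vec_of_indexed n ix f = (\<chi> k. f (inv_into {1..n} ix k))"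

lemma vec_of_indexed_nth:
  "bij_betw ix {1..n} UNIV \<Longrightarrow> i \<in> {1..n} \<Longrightarrow> vec_of_indexed n ix f $ ix i = f i"
  unfolding vec_of_indexed_def by (simp add: bij_betw_inv_into_left)

lemma bform_reindex:
  "bij_betw ix {1..n} UNIV \<Longrightarrow> bform form u v = (\<Sum>i=1..n. form (u $ ix i) (v $ ix i))"
  unfolding bform_def by (rule sum.reindex_bij_betw[symmetric])

lemma bform_axis:
  "bounded_bilinear form \<Longrightarrow> bform form u (axis k y) = form (u $ k) y"
  unfolding bform_def axis_def by (simp add: if_distrib bounded_bilinear.zero_right cong: if_cong)

lemma nondegenerate_form_bform:
  fixes form :: "'a::euclidean_space \<Rightarrow> 'a \<Rightarrow> real"
  assumes "nondegenerate_form form"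
  shows "nondegenerate_form (bform form :: 'a ^ 'n::finite \<Rightarrow> _)"
proof -
  interpret nondegenerate_form form
    by (rule assms)
  interpret bounded_bilinear form
    by (rule bounded_bilinear)
  show ?thesis
  proof
    show "bilinear (bform form :: 'a ^ 'n \<Rightarrow> _)"
      unfolding bilinear_def bform_def
      by (auto intro!: linearI simp: add_left add_right scaleR_left scaleR_right sum.distrib sum_distrib_left)
  next
    fix u :: "'a ^ 'n" assume "\<And>v. bform form u v = 0"
    then have "form (u $ k) y = 0" for k y
      using bform_axis[OF bounded_bilinear_axioms, of u k y] by simp
    then show "u = 0"
      using nondegenerate by (simp add: vec_eq_iff)
  qed
qed

section \<open>Ad-invariant functions are invariant under cyclic permutations\<close>

(* The library's poly needs a commutative ring; this is Horner evaluation in any real algebra. *)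
definition peval :: "real poly \<Rightarrow> 'a::real_algebra_1 \<Rightarrow> 'a" where
  "peval p x = fold_coeffs (\<lambda>a y. a *\<^sub>R 1 + x * y) p 0"

lemma peval_0 [simp]: "peval 0 x = 0"
  by (simp add: peval_def)

lemma peval_pCons [simp]: "peval (pCons a p) x = a *\<^sub>R 1 + x * peval p x"
  by (cases "p = 0 \<and> a = 0") (auto simp: peval_def)

lemma peval_add [simp]: "peval (p + q) x = peval p x + peval q x"
proof (induction p arbitrary: q)
  case (pCons a p)
  then show ?case
    by (cases q) (simp add: algebra_simps)
qed simp

lemma peval_smult [simp]: "peval (smult c p) x = c *\<^sub>R peval p x"
  by (induction p) (simp_all add: algebra_simps)

lemma peval_minus [simp]: "peval (- p) x = - peval p x"
  using peval_smult[of "-1" p x] by simp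

lemma peval_diff [simp]: "peval (p - q) x = peval p x - peval q x"
  using peval_add[of p "- q" x] by simp

lemma peval_monom [simp]: "peval (monom c m) x = c *\<^sub>R x ^ m"
  by (induction m) (simp_all add: monom_Suc monom_0 mult_scaleR_right)

lemma peval_commute: "x * peval p x = peval p x * x"
proof (induction p)
  case (pCons a p)
  have "x * (x * peval p x) = x * peval p x * x"
    by (metis pCons.IH mult.assoc)
  then show ?case
    by (simp add: distrib_left distrib_right)
qed simp

lemma power_in_span_lower_powers:
  fixes M :: "'a::{real_algebra_1, euclidean_space}"
  obtains m where "M ^ m \<in> span ((\<lambda>i. M ^ i) ` {..<m})"
proof -
  have "\<exists>m. M ^ m \<in> span ((\<lambda>i. M ^ i) ` {..<m})"
  proof (rule ccontr)
    assume "\<nexists>m. M ^ m \<in> span ((\<lambda>i. M ^ i) ` {..<m})"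
    then have "dim ((\<lambda>i. M ^ i) ` {..<m}) = m" for m
      by (induction m) (simp_all add: lessThan_Suc dim_insert)
    then show False
      using dim_subset_UNIV[of "(\<lambda>i. M ^ i) ` {..<Suc DIM('a)}"] by simp
  qed
  then show thesis
    using that by blast
qed

lemma span_powers_eq_peval:
  fixes M :: "'a::{real_algebra_1, euclidean_space}"
  assumes "x \<in> span ((\<lambda>i. M ^ i) ` {..<m})"
  obtains q where "\<forall>i\<ge>m. coeff q i = 0" "peval q M = x"
proof -
  let ?P = "{peval q M |q. \<forall>i\<ge>m. coeff q i = 0}"
  have "subspace ?P"
  proof (unfold subspace_def, intro conjI allI impI ballI)
    show "0 \<in> ?P"
      by (auto intro!: exI[of _ 0])
  next
    fix x y assume "x \<in> ?P" "y \<in> ?P"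
    then obtain q q' where "x = peval q M" "y = peval q' M"
      and "\<forall>i\<ge>m. coeff q i = 0" "\<forall>i\<ge>m. coeff q' i = 0"
      by blast
    then show "x + y \<in> ?P"
      by (auto intro!: exI[of _ "q + q'"])
  next
    fix c x assume "x \<in> ?P"
    then obtain q where "x = peval q M" "\<forall>i\<ge>m. coeff q i = 0"
      by blast
    then show "c *\<^sub>R x \<in> ?P"
      by (auto intro!: exI[of _ "smult c q"])
  qed
  moreover have "(\<lambda>i. M ^ i) ` {..<m} \<subseteq> ?P"
    by (auto intro!: exI[of _ "monom 1 _"] simp: coeff_monom)
  ultimately show thesis
    using assms span_minimal that by blast
qed

lemma annihilating_polynomial:
  fixes M :: "'a::{real_algebra_1, euclidean_space}"
  obtains p where "p \<noteq> 0" "peval p M = 0"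
proof -
  obtain m where "M ^ m \<in> span ((\<lambda>i. M ^ i) ` {..<m})"
    by (rule power_in_span_lower_powers)
  then obtain q where q: "\<forall>i\<ge>m. coeff q i = 0" "peval q M = M ^ m"
    by (rule span_powers_eq_peval)
  have "coeff (monom 1 m - q) m = 1"
    using q(1) by simp
  then show thesis
    using q(2) by (intro that[of "monom 1 m - q"]) auto
qed

lemma finite_non_unit_shifts:
  fixes M :: "'a::{real_algebra_1, euclidean_space}"
  shows "finite {s::real. \<nexists>k. (M + s *\<^sub>R 1) * k = 1 \<and> k * (M + s *\<^sub>R 1) = 1}"
proof -
  obtain p where p: "p \<noteq> 0" "peval p M = 0"
    by (rule annihilating_polynomial)
  have unit: "\<exists>k. (M + s *\<^sub>R 1) * k = 1 \<and> k * (M + s *\<^sub>R 1) = 1" if "poly p (- s) \<noteq> 0" for s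
  proof -
    \<comment> \<open>Dividing p by X + s: p(M) = (M + s) q(M) + p(-s), and q(M) commutes with M.\<close>
    define q where "q = synthetic_div p (- s)"
    define r where "r = poly p (- s)"
    have "p = smult s q + pCons 0 q + [:r:]"
      using synthetic_div_correct'[of "- s" p] by (simp add: q_def r_def)
    then have "peval p M = (M + s *\<^sub>R 1) * peval q M + r *\<^sub>R 1"
      by (simp add: distrib_right)
    then have "(M + s *\<^sub>R 1) * peval q M = - (r *\<^sub>R 1)"
      using p(2) by (simp add: eq_neg_iff_add_eq_0)
    moreover have "peval q M * (M + s *\<^sub>R 1) = (M + s *\<^sub>R 1) * peval q M"
      by (simp add: algebra_simps peval_commute)
    moreover have "r \<noteq> 0"
      using that by (simp add: r_def)
    ultimately show ?thesis
      by (intro exI[of _ "(- inverse r) *\<^sub>R peval q M"]) (simp add: mult_scaleR_left mult_scaleR_right)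
  qed
  have "finite (uminus -` {x. poly p x = 0} :: real set)"
    using poly_roots_finite[OF p(1)] by (rule finite_vimageI) simp
  moreover have "{s. \<nexists>k. (M + s *\<^sub>R 1) * k = 1 \<and> k * (M + s *\<^sub>R 1) = 1} \<subseteq> uminus -` {x. poly p x = 0}"
    using unit by blast
  ultimately show ?thesis
    by (rule finite_subset[rotated])
qed

lemma bounded_bilinear_mult_euclidean:
  "bounded_bilinear ((*) :: 'a::{real_algebra_1, euclidean_space} \<Rightarrow> 'a \<Rightarrow> 'a)"
proof -
  have "bilinear ((*) :: 'a \<Rightarrow> 'a \<Rightarrow> 'a)"
    unfolding bilinear_def by (auto intro!: linearI simp: distrib_left distrib_right)
  then show ?thesis
    using bilinear_conv_bounded_bilinear by blast
qed

lemma inv_form_nondegenerate_form: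
  fixes form :: "'a::{real_algebra_1, euclidean_space} \<Rightarrow> 'a \<Rightarrow> real"
  shows "inv_form form \<Longrightarrow> nondegenerate_form form"
  unfolding inv_form_def by unfold_locales blast+

lemma inv_form_assoc: "inv_form form \<Longrightarrow> form (x * y) z = form x (y * z)"
  unfolding inv_form_def by blast

lemma inv_form_commute: "inv_form form \<Longrightarrow> form x y = form y x"
  unfolding inv_form_def by blast

lemma inv_form_cyclic: "inv_form form \<Longrightarrow> form x (y * z) = form (z * x) y"
  unfolding inv_form_def by metis

lemma inv_form_sandwich: "inv_form form \<Longrightarrow> form x (y * z * w) = form (w * x * y) z"
  using inv_form_cyclic[of form x "y * z" w] inv_form_assoc[of form "w * x" y z] by simp

lemma smooth_differentiable: "smooth f \<Longrightarrow> f differentiable (at x)"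
  unfolding smooth_def by (metis Ck.simps(2))

lemma smooth_continuous_on: "smooth f \<Longrightarrow> continuous_on UNIV f"
  unfolding smooth_def by (metis Ck.simps(1))

lemma Ad_invariant_mult_commute:
  fixes \<phi> :: "'a::{real_algebra_1, euclidean_space} \<Rightarrow> real"
  assumes ad: "Ad_invariant \<phi>" and cont: "continuous_on UNIV \<phi>"
  shows "\<phi> (M * N) = \<phi> (N * M)"
proof -
  have unit: "\<phi> (h * N) = \<phi> (N * h)" if "h * k = 1" "k * h = 1" for h k
  proof -
    have "h * (N * h) * k = h * N"
      by (simp add: mult.assoc that(1))
    then show ?thesis
      using ad that unfolding Ad_invariant_def by metis
  qed
  let ?S = "{s::real. \<nexists>k. (M + s *\<^sub>R 1) * k = 1 \<and> k * (M + s *\<^sub>R 1) = 1}"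
  have "\<not> 0 islimpt ?S"
    using finite_non_unit_shifts islimpt_finite by blast
  then have "\<forall>\<^sub>F s in at 0. s \<notin> ?S"
    by (simp add: islimpt_iff_eventually)
  then have eq: "\<forall>\<^sub>F s in at 0. \<phi> ((M + s *\<^sub>R 1) * N) = \<phi> (N * (M + s *\<^sub>R 1))"
    by eventually_elim (use unit in blast)
  have conv: "((\<lambda>s. \<phi> (X (M + s *\<^sub>R 1))) \<longlongrightarrow> \<phi> (X M)) (at 0)"
    if "bounded_linear X" for X
    using cont by (intro isCont_tendsto_compose[of _ \<phi>] bounded_linear.tendsto[OF that])
      (auto intro!: tendsto_eq_intros simp: continuous_on_eq_continuous_at)
  have "((\<lambda>s. \<phi> ((M + s *\<^sub>R 1) * N)) \<longlongrightarrow> \<phi> (M * N)) (at 0)"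
    using conv[OF bounded_bilinear.bounded_linear_left[OF bounded_bilinear_mult_euclidean]] .
  then have "((\<lambda>s. \<phi> (N * (M + s *\<^sub>R 1))) \<longlongrightarrow> \<phi> (M * N)) (at 0)"
    using eq by (rule Lim_transform_eventually)
  moreover have "((\<lambda>s. \<phi> (N * (M + s *\<^sub>R 1))) \<longlongrightarrow> \<phi> (N * M)) (at 0)"
    using conv[OF bounded_bilinear.bounded_linear_right[OF bounded_bilinear_mult_euclidean]] .
  ultimately show ?thesis
    by (rule tendsto_unique[OF trivial_limit_at])
qed

lemma grad_mult_commute:
  fixes form :: "'a::{real_algebra_1, euclidean_space} \<Rightarrow> 'a \<Rightarrow> real"
  assumes form: "inv_form form" and ad: "Ad_invariant \<phi>" and sm: "smooth \<phi>"
  shows "grad form \<phi> (M * N) * M = M * grad form \<phi> (N * M)"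
proof -
  interpret nondegenerate_form form
    by (rule inv_form_nondegenerate_form[OF form])
  have deriv: "((\<lambda>e. \<phi> (P + e *\<^sub>R X)) has_real_derivative form (grad form \<phi> P) X) (at 0)" for P X
    by (intro has_derivative_along_line has_derivative_grad smooth_differentiable[OF sm])
  have "(\<lambda>e. \<phi> (M * N + e *\<^sub>R (M * X))) = (\<lambda>e. \<phi> (N * M + e *\<^sub>R (X * M)))" for X
    using Ad_invariant_mult_commute[OF ad smooth_continuous_on[OF sm], of M "N + _ *\<^sub>R X"]
    by (simp add: algebra_simps)
  then have "form (grad form \<phi> (M * N)) (M * X) = form (grad form \<phi> (N * M)) (X * M)" for X
    using deriv DERIV_unique by metis
  then have "form (grad form \<phi> (M * N) * M) X = form (M * grad form \<phi> (N * M)) X" for X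
    by (simp add: inv_form_assoc[OF form] inv_form_cyclic[OF form, of _ X M])
  then show ?thesis
    by (rule eqI)
qed

lemma mult_grad_mult_eq_dphi:
  fixes form :: "'a::{real_algebra_1, euclidean_space} \<Rightarrow> 'a \<Rightarrow> real"
  assumes "inv_form form" "Ad_invariant \<phi>" "smooth \<phi>"
  shows "M * grad form \<phi> (N * M) * N = dphi form \<phi> (M * N)"
proof -
  have "M * grad form \<phi> (N * M) * N = grad form \<phi> (M * N) * (M * N)"
    by (metis grad_mult_commute[OF assms] mult.assoc)
  also have "\<dots> = M * N * grad form \<phi> (M * N)"
    using grad_mult_commute[OF assms, of "M * N" 1] by (simp only: mult_1_left mult_1_right)
  finally show ?thesis
    by (simp add: dphi_def)
qed

section \<open>The gradient of phi applied to an ordered product\<close>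

lemma rprod_empty: "j < i \<Longrightarrow> rprod a i j = 1"
  unfolding rprod_def by simp

lemma rprod_Suc: "i \<le> Suc m \<Longrightarrow> rprod a i (Suc m) = a (Suc m) * rprod a i m"
  unfolding rprod_def by (simp add: upt_Suc_append)

lemma rprod_split: "i \<le> j + 1 \<Longrightarrow> j \<le> m \<Longrightarrow> rprod a i m = rprod a (j + 1) m * rprod a i j"
proof (induction m)
  case (Suc m)
  then show ?case
    by (cases "j = Suc m") (simp_all add: rprod_empty rprod_Suc mult.assoc)
qed (simp add: rprod_empty)

lemma has_vector_derivative_rprod:
  fixes a b :: "nat \<Rightarrow> 'a::{real_algebra_1, euclidean_space}"
  shows "((\<lambda>e. rprod (\<lambda>k. a k + e *\<^sub>R b k) 1 m) has_vector_derivative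
           (\<Sum>j=1..m. rprod a (j + 1) m * b j * rprod a 1 (j - 1))) (at 0)"
proof (induction m)
  case 0
  then show ?case
    by (simp add: rprod_empty)
next
  case (Suc m)
  have factor: "((\<lambda>e. a (Suc m) + e *\<^sub>R b (Suc m)) has_vector_derivative b (Suc m)) (at 0)"
    by (auto intro!: derivative_eq_intros)
  have "((\<lambda>e. (a (Suc m) + e *\<^sub>R b (Suc m)) * rprod (\<lambda>k. a k + e *\<^sub>R b k) 1 m) has_vector_derivative
      a (Suc m) * (\<Sum>j=1..m. rprod a (j + 1) m * b j * rprod a 1 (j - 1)) + b (Suc m) * rprod a 1 m) (at 0)"
    using bounded_bilinear.has_vector_derivative[OF bounded_bilinear_mult_euclidean factor Suc.IH]
    by simp
  moreover have "a (Suc m) * (\<Sum>j=1..m. rprod a (j + 1) m * b j * rprod a 1 (j - 1)) + b (Suc m) * rprod a 1 m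
      = (\<Sum>j=1..Suc m. rprod a (j + 1) (Suc m) * b j * rprod a 1 (j - 1))"
    by (simp add: sum_distrib_left rprod_Suc rprod_empty mult.assoc)
  ultimately show ?case
    by (simp add: rprod_Suc)
qed

lemma grad_rprod_nth:
  fixes form :: "'a::{real_algebra_1, euclidean_space} \<Rightarrow> 'a \<Rightarrow> real" and ix :: "nat \<Rightarrow> 'n::finite"
  assumes form: "inv_form form" and ix: "bij_betw ix {1..n} UNIV"
    and diff: "\<phi> differentiable (at (rprod (\<lambda>k. u $ ix k) 1 n))" and i: "i \<in> {1..n}"
  shows "grad (bform form) (\<lambda>u. \<phi> (rprod (\<lambda>k. u $ ix k) 1 n)) u $ ix i
       = rprod (\<lambda>k. u $ ix k) 1 (i - 1) * grad form \<phi> (rprod (\<lambda>k. u $ ix k) 1 n)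
         * rprod (\<lambda>k. u $ ix k) (i + 1) n"
proof -
  interpret nondegenerate_form form
    by (rule inv_form_nondegenerate_form[OF form])
  interpret bform: nondegenerate_form "bform form :: 'a ^ 'n \<Rightarrow> _"
    by (rule nondegenerate_form_bform[OF inv_form_nondegenerate_form[OF form]])
  define a where "a = (\<lambda>k. u $ ix k)"
  define g where "g = grad form \<phi> (rprod a 1 n)"
  define W where "W = vec_of_indexed n ix (\<lambda>j. rprod a 1 (j - 1) * g * rprod a (j + 1) n)"
  have "grad (bform form) (\<lambda>u. \<phi> (rprod (\<lambda>k. u $ ix k) 1 n)) u = W"
  proof (rule bform.grad_eqI)
    fix X :: "'a ^ 'n"
    define b where "b k = X $ ix k" for k
    have "((\<lambda>e. \<phi> (rprod (\<lambda>k. a k + e *\<^sub>R b k) 1 n)) has_real_derivative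
        form g (\<Sum>j=1..n. rprod a (j + 1) n * b j * rprod a 1 (j - 1))) (at 0)"
      by (rule has_real_derivative_compose_curve[OF has_vector_derivative_rprod])
        (use has_derivative_grad[OF diff] in \<open>simp add: g_def a_def\<close>)
    also have "form g (\<Sum>j=1..n. rprod a (j + 1) n * b j * rprod a 1 (j - 1)) = bform form W X"
      by (simp add: bounded_bilinear.sum_right[OF bounded_bilinear] bform_reindex[OF ix]
          vec_of_indexed_nth[OF ix] W_def b_def inv_form_sandwich[OF form])
    finally show "((\<lambda>e. \<phi> (rprod (\<lambda>k. (u + e *\<^sub>R X) $ ix k) 1 n)) has_real_derivative
        bform form W X) (at 0)"
      by (simp add: a_def b_def)
  qed
  then show ?thesis
    using vec_of_indexed_nth[OF ix i] by (simp add: W_def a_def g_def)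
qed

lemma rprod_grad_rprod_eq_dphi_Tprod:
  fixes form :: "'a::{real_algebra_1, euclidean_space} \<Rightarrow> 'a \<Rightarrow> real"
  assumes "inv_form form" "Ad_invariant \<phi>" "smooth \<phi>" and "i \<le> n"
  shows "rprod a 1 i * grad form \<phi> (rprod a 1 n) * rprod a (i + 1) n = dphi form \<phi> (Tprod a n i)"
  using mult_grad_mult_eq_dphi[OF assms(1-3), of "rprod a 1 i" "rprod a (i + 1) n"]
    rprod_split[of 1 i n a] assms(4)
  by (simp add: Tprod_def)

lemma
  fixes form :: "'a::{real_algebra_1, euclidean_space} \<Rightarrow> 'a \<Rightarrow> real" and ix :: "nat \<Rightarrow> 'n::finite"
  assumes form: "inv_form form" and ix: "bij_betw ix {1..n} UNIV"
    and ad: "Ad_invariant \<phi>" and sm: "smooth \<phi>" and j: "j \<in> {1..n}"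
  shows dj_rprod: "dj form ix (\<lambda>u. \<phi> (rprod (\<lambda>k. u $ ix k) 1 n)) j u
      = dphi form \<phi> (Tprod (\<lambda>k. u $ ix k) n j)"
    and dj'_rprod: "dj' form ix (\<lambda>u. \<phi> (rprod (\<lambda>k. u $ ix k) 1 n)) j u
      = dphi form \<phi> (Tprod (\<lambda>k. u $ ix k) n (j - 1))"
proof -
  define a where "a = (\<lambda>k. u $ ix k)"
  have grad: "grad (bform form) (\<lambda>u. \<phi> (rprod (\<lambda>k. u $ ix k) 1 n)) u $ ix j
      = rprod a 1 (j - 1) * grad form \<phi> (rprod a 1 n) * rprod a (j + 1) n"
    unfolding a_def using grad_rprod_nth[OF form ix smooth_differentiable[OF sm] j] .
  have "rprod a 1 j = a j * rprod a 1 (j - 1)"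
    using rprod_Suc[of 1 "j - 1" a] j by simp
  then show "dj form ix (\<lambda>u. \<phi> (rprod (\<lambda>k. u $ ix k) 1 n)) j u = dphi form \<phi> (Tprod (\<lambda>k. u $ ix k) n j)"
    unfolding dj_def grad using j rprod_grad_rprod_eq_dphi_Tprod[OF form ad sm, of j n a]
    by (simp add: mult.assoc a_def)
  have split: "rprod a j n = rprod a (j + 1) n * a j"
    using rprod_split[of j j n a] rprod_Suc[of j "j - 1" a] rprod_empty[of "j - 1" j a] j by simp
  have "j - 1 \<le> n" "j - 1 + 1 = j"
    using j by auto
  then have sandwich: "rprod a 1 (j - 1) * grad form \<phi> (rprod a 1 n) * rprod a j n
      = dphi form \<phi> (Tprod a n (j - 1))"
    using rprod_grad_rprod_eq_dphi_Tprod[OF form ad sm, of "j - 1" n a] by simp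
  show "dj' form ix (\<lambda>u. \<phi> (rprod (\<lambda>k. u $ ix k) 1 n)) j u
      = dphi form \<phi> (Tprod (\<lambda>k. u $ ix k) n (j - 1))"
    unfolding dj'_def grad using split sandwich by (simp add: mult.assoc a_def)
qed

lemma sum_cyclic_shift:
  fixes n :: nat
  assumes "g 0 = g n"
  shows "(\<Sum>j=1..n. f j (g (j - 1))) = (\<Sum>j=1..n. f (j mod n + 1) (g j))"
proof (cases n)
  case (Suc m)
  have "(\<Sum>j=1..n. f j (g (j - 1))) = f 1 (g 0) + (\<Sum>j=Suc 1..Suc m. f j (g (j - 1)))"
    using sum.atLeast_Suc_atMost[of 1 n "\<lambda>j. f j (g (j - 1))"] by (simp add: Suc)
  also have "\<dots> = f 1 (g 0) + (\<Sum>j=1..m. f (Suc j) (g j))"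
    by (simp only: sum.shift_bounds_cl_Suc_ivl diff_Suc_1)
  also have "(\<Sum>j=1..m. f (Suc j) (g j)) = (\<Sum>j=1..m. f (j mod n + 1) (g j))"
    by (intro sum.cong) (auto simp: Suc)
  finally show ?thesis
    using assms by (simp add: Suc sum.cl_ivl_Suc add.commute)
qed simp

section \<open>Brackets with linear functions and the equations of motion\<close>

definition PB_vector_field :: "('a::real_algebra_1 \<Rightarrow> 'a \<Rightarrow> real) \<Rightarrow> nat \<Rightarrow> (nat \<Rightarrow> 'n::finite)
    \<Rightarrow> ('a ^ 'n \<Rightarrow> 'a ^ 'n) \<Rightarrow> ('a ^ 'n \<Rightarrow> 'a ^ 'n) \<Rightarrow> ('a ^ 'n \<Rightarrow> 'a ^ 'n) \<Rightarrow> ('a ^ 'n \<Rightarrow> 'a ^ 'n)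
    \<Rightarrow> ('a ^ 'n \<Rightarrow> real) \<Rightarrow> 'a ^ 'n \<Rightarrow> 'a ^ 'n" where
  "PB_vector_field form n ix A B C D F u = vec_of_indexed n ix (\<lambda>i.
      u $ ix i * (\<Sum>j=1..n. cmp ix A i j (dj' form ix F j u) + cmp ix B i j (dj form ix F j u))
    - (\<Sum>j=1..n. cmp ix D i j (dj form ix F j u) + cmp ix C i j (dj' form ix F j u)) * u $ ix i)"

lemma PB_linear_right:
  fixes form :: "'a::{real_algebra_1, euclidean_space} \<Rightarrow> 'a \<Rightarrow> real" and ix :: "nat \<Rightarrow> 'n::finite"
  assumes form: "inv_form form" and ix: "bij_betw ix {1..n} UNIV" and l: "linear l"
  shows "PB form n ix A B C D F l u = l (PB_vector_field form n ix A B C D F u)"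
proof -
  interpret nondegenerate_form form
    by (rule inv_form_nondegenerate_form[OF form])
  interpret bounded_bilinear form
    by (rule bounded_bilinear)
  interpret bform: nondegenerate_form "bform form :: 'a ^ 'n \<Rightarrow> _"
    by (rule nondegenerate_form_bform[OF inv_form_nondegenerate_form[OF form]])
  define w where "w = grad (bform form) l u"
  define V where "V = PB_vector_field form n ix A B C D F u"
  have "PB form n ix A B C D F l u = (\<Sum>i=1..n. form (V $ ix i) (w $ ix i))"
    unfolding PB_def
  proof (intro sum.cong refl)
    fix i assume "i \<in> {1..n}"
    then show "(\<Sum>j=1..n.
        form (cmp ix A i j (dj' form ix F j u)) (dj' form ix l i u)
      - form (cmp ix D i j (dj form ix F j u)) (dj form ix l i u)
      + form (cmp ix B i j (dj form ix F j u)) (dj' form ix l i u)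
      - form (cmp ix C i j (dj' form ix F j u)) (dj form ix l i u)) = form (V $ ix i) (w $ ix i)"
      unfolding dj_def[of _ _ l] dj'_def[of _ _ l] w_def[symmetric]
      by (simp add: V_def PB_vector_field_def vec_of_indexed_nth[OF ix]
          inv_form_cyclic[OF form, of _ "w $ ix i" "u $ ix i"]
          inv_form_assoc[OF form, of _ "u $ ix i" "w $ ix i", symmetric]
          distrib_left distrib_right sum_distrib_left sum_distrib_right
          add_left diff_left sum_left sum.distrib sum_subtractf)
  qed
  also have "\<dots> = bform form w V"
    unfolding bform_reindex[OF ix] by (intro sum.cong refl) (rule inv_form_commute[OF form])
  also have "\<dots> = l V"
    unfolding w_def by (rule bform.grad_linear[OF l])
  finally show ?thesis
    unfolding V_def .
qed

lemma PB_vector_field_rprod_nth: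
  fixes form :: "'a::{real_algebra_1, euclidean_space} \<Rightarrow> 'a \<Rightarrow> real" and ix :: "nat \<Rightarrow> 'n::finite"
  assumes form: "inv_form form" and ix: "bij_betw ix {1..n} UNIV"
    and ad: "Ad_invariant \<phi>" and sm: "smooth \<phi>" and i: "i \<in> {1..n}"
  shows "PB_vector_field form n ix A B C D (\<lambda>u. \<phi> (rprod (\<lambda>k. u $ ix k) 1 n)) u $ ix i
    = u $ ix i * (\<Sum>j=1..n. cmp ix A i (j mod n + 1) (dphi form \<phi> (Tprod (\<lambda>k. u $ ix k) n j))
                           + cmp ix B i j (dphi form \<phi> (Tprod (\<lambda>k. u $ ix k) n j)))
    - (\<Sum>j=1..n. cmp ix D i j (dphi form \<phi> (Tprod (\<lambda>k. u $ ix k) n j))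
                + cmp ix C i (j mod n + 1) (dphi form \<phi> (Tprod (\<lambda>k. u $ ix k) n j))) * u $ ix i"
proof -
  define E where "E j = dphi form \<phi> (Tprod (\<lambda>k. u $ ix k) n j)" for j
  have "E 0 = E n"
    by (simp add: E_def Tprod_def rprod_empty)
  then have "(\<Sum>j=1..n. cmp ix X i j (E (j - 1))) = (\<Sum>j=1..n. cmp ix X i (j mod n + 1) (E j))" for X
    by (rule sum_cyclic_shift)
  then show ?thesis
    using dj_rprod[OF form ix ad sm] dj'_rprod[OF form ix ad sm]
    by (simp add: PB_vector_field_def vec_of_indexed_nth[OF ix i] sum.distrib flip: E_def)
qed

lemma has_vector_derivative_iff_linear_functionals:
  fixes \<gamma> :: "real \<Rightarrow> 'v::euclidean_space"
  shows "(\<gamma> has_vector_derivative v) (at t) \<longleftrightarrow>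
    (\<forall>l. linear l \<longrightarrow> ((\<lambda>s. l (\<gamma> s)) has_real_derivative l v) (at t))"
proof (intro iffI allI impI)
  fix l :: "'v \<Rightarrow> real"
  assume "(\<gamma> has_vector_derivative v) (at t)" "linear l"
  then show "((\<lambda>s. l (\<gamma> s)) has_real_derivative l v) (at t)"
    by (simp add: bounded_linear.has_vector_derivative linear_conv_bounded_linear
        has_real_derivative_iff_has_vector_derivative)
next
  assume "\<forall>l. linear l \<longrightarrow> ((\<lambda>s. l (\<gamma> s)) has_real_derivative l v) (at t)"
  moreover have "linear (\<lambda>x. x \<bullet> b)" for b :: 'v
    by (simp add: bounded_linear.linear bounded_linear_inner_left)
  ultimately have "((\<lambda>s. \<gamma> s \<bullet> b) has_real_derivative v \<bullet> b) (at t)" for b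
    by blast
  then show "(\<gamma> has_vector_derivative v) (at t)"
    unfolding has_vector_derivative_def has_derivative_componentwise_within[of \<gamma> _ t UNIV]
    by (simp add: has_field_derivative_def mult.commute[of _ "v \<bullet> _"])
qed

lemma has_vector_derivative_vec_nth_iff:
  fixes \<gamma> :: "real \<Rightarrow> 'a::euclidean_space ^ 'n::finite"
  shows "(\<gamma> has_vector_derivative v) F \<longleftrightarrow> (\<forall>k. ((\<lambda>s. \<gamma> s $ k) has_vector_derivative v $ k) F)"
proof (intro iffI allI)
  fix k
  assume "(\<gamma> has_vector_derivative v) F"
  then show "((\<lambda>s. \<gamma> s $ k) has_vector_derivative v $ k) F"
    by (rule bounded_linear.has_vector_derivative[OF bounded_linear_vec_nth])
next
  have axis_sum: "(\<Sum>k\<in>UNIV. axis k (x $ k)) = x" for x :: "'a ^ 'n"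
    by (simp add: vec_eq_iff axis_def if_distrib cong: if_cong)
  have axis: "bounded_linear (axis k :: 'a \<Rightarrow> 'a ^ 'n)" for k
    by (auto intro!: linearI simp: linear_conv_bounded_linear[symmetric] vec_eq_iff axis_def)
  assume "\<forall>k. ((\<lambda>s. \<gamma> s $ k) has_vector_derivative v $ k) F"
  then have "((\<lambda>s. axis k (\<gamma> s $ k)) has_vector_derivative axis k (v $ k)) F" for k
    by (intro bounded_linear.has_vector_derivative[OF axis]) blast
  then have "((\<lambda>s. \<Sum>k\<in>UNIV. axis k (\<gamma> s $ k)) has_vector_derivative (\<Sum>k\<in>UNIV. axis k (v $ k))) F"
    by (rule has_vector_derivative_sum)
  then show "(\<gamma> has_vector_derivative v) F"
    by (simp only: axis_sum)
qed

theorem proposition6: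
  fixes form :: "'a::{real_algebra_1, euclidean_space} \<Rightarrow> 'a \<Rightarrow> real"
    and n :: nat and ix :: "nat \<Rightarrow> 'n::finite"
    and A B C D :: "'a ^ 'n \<Rightarrow> 'a ^ 'n"
    and \<phi> :: "'a \<Rightarrow> real"
    and \<gamma> :: "real \<Rightarrow> 'a ^ 'n"
  assumes form: "inv_form form"
    and ix: "bij_betw ix {1..n} UNIV"
    and lin: "linear A" "linear B" "linear C" "linear D"
    and adjA: "\<forall>i\<in>{1..n}. \<forall>j\<in>{1..n}. adjoint form (cmp ix A i j) = (\<lambda>x. - cmp ix A j i x)"
    and adjD: "\<forall>i\<in>{1..n}. \<forall>j\<in>{1..n}. adjoint form (cmp ix D i j) = (\<lambda>x. - cmp ix D j i x)"
    and adjB: "\<forall>i\<in>{1..n}. \<forall>j\<in>{1..n}. adjoint form (cmp ix B i j) = cmp ix C j i"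
    and poisson: "is_poisson_bracket (PB form n ix A B C D)"
    and smooth: "smooth \<phi>"
    and adinv: "Ad_invariant \<phi>"
  defines "\<Phi> \<equiv> (\<lambda>u. \<phi> (rprod (\<lambda>k. u $ ix k) 1 n))"
    and "R \<equiv> (\<lambda>u i. \<Sum>j=1..n. cmp ix A i (j mod n + 1) (dphi form \<phi> (Tprod (\<lambda>k. u $ ix k) n j))
                               + cmp ix B i j (dphi form \<phi> (Tprod (\<lambda>k. u $ ix k) n j)))"
    and "L \<equiv> (\<lambda>u i. \<Sum>j=1..n. cmp ix D i j (dphi form \<phi> (Tprod (\<lambda>k. u $ ix k) n j))
                               + cmp ix C i (j mod n + 1) (dphi form \<phi> (Tprod (\<lambda>k. u $ ix k) n j)))"
  shows "(\<forall>t. \<forall>l. linear l \<longrightarrow>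
            ((\<lambda>s. l (\<gamma> s)) has_real_derivative PB form n ix A B C D \<Phi> l (\<gamma> t)) (at t))
     \<longleftrightarrow> (\<forall>t. \<forall>i\<in>{1..n}.
            ((\<lambda>s. \<gamma> s $ ix i) has_vector_derivative
               (\<gamma> t $ ix i * R (\<gamma> t) i - L (\<gamma> t) i * \<gamma> t $ ix i)) (at t))"
proof -
  let ?V = "PB_vector_field form n ix A B C D \<Phi>"
  have all_ix: "(\<forall>k. P k) \<longleftrightarrow> (\<forall>i\<in>{1..n}. P (ix i))" for P
    using ball_simps(9)[where A = "{1..n}" and P = P and f = ix]
    by (simp only: bij_betw_imp_surj_on[OF ix] ball_UNIV)
  have "(\<forall>t. \<forall>l. linear l \<longrightarrow>
            ((\<lambda>s. l (\<gamma> s)) has_real_derivative PB form n ix A B C D \<Phi> l (\<gamma> t)) (at t))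
     \<longleftrightarrow> (\<forall>t. (\<gamma> has_vector_derivative ?V (\<gamma> t)) (at t))"
    by (simp add: PB_linear_right[OF form ix] has_vector_derivative_iff_linear_functionals)
  also have "\<dots> \<longleftrightarrow> (\<forall>t. \<forall>i\<in>{1..n}. ((\<lambda>s. \<gamma> s $ ix i) has_vector_derivative ?V (\<gamma> t) $ ix i) (at t))"
    by (simp only: has_vector_derivative_vec_nth_iff all_ix)
  also have "\<dots> \<longleftrightarrow> (\<forall>t. \<forall>i\<in>{1..n}.
            ((\<lambda>s. \<gamma> s $ ix i) has_vector_derivative
               (\<gamma> t $ ix i * R (\<gamma> t) i - L (\<gamma> t) i * \<gamma> t $ ix i)) (at t))"
    by (simp add: R_def L_def PB_vector_field_rprod_nth[OF form ix adinv smooth, folded \<Phi>_def])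
  finally show ?thesis .
qed

end
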